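(* Under the hypotheses and notation below, for every cluster $\mathrm{Cl}(y)$ and every $y'\in\mathrm{Cl}(y)$, we have $y'+e_Z(H_Zy')\in y+e_Z(H_Zy)+C_X^\perp$.
   Context: $\mathcal{C}=\mathrm{CSS}(C_X=\ker H_X,C_Z=\ker H_Z)$ is an $[[n,k,d]]_2$ CSS code ($H_Z\in\mathbb{F}_2^{m_Z\times n}$, $C_X^\perp\subseteq C_Z$) exhibiting $(c_1,c_2,\epsilon_0)$-clustering (for all $0<\epsilon<\epsilon_0$, every $y$ with $|H_Zy|\le\epsilon m_Z$ has $|y|_{C_X^\perp}\le c_1\epsilon n$ or $\ge c_2n$, and symmetrically for $X$), where $|y|_C=\min_{y'\in C}|y+y'|$. Let $\epsilon<\frac{1}{1000}\min\{\frac{\epsilon_0}{2},\frac{c_2}{4c_1},\frac{d}{2c_1n}\}$, $\epsilon'=1000\epsilon$, $G_Z^{\epsilon'}=\{y:|H_Zy|\le\epsilon'm_Z\}$. For $y\in G_Z^{\epsilon'}$, $\mathrm{Cl}(y)=\{y'\in G_Z^{\epsilon'}:|y+y'|_{C_X^\perp}\le2c_1\epsilon'n\}$; these clusters partition $G_Z^{\epsilon'}$, and $\mathrm{Cl}(y+c)=\mathrm{Cl}(y)+c$ for $c\in C_Z$. For each cluster let $\mathcal{T}(\mathrm{Cl}(y))=\{\mathrm{Cl}(y+c):c\in C_Z\}$ be its collection of translates, and for each such collection $\mathcal{T}$ fix an arbitrary representative cluster $R(\mathcal{T})\in\mathcal{T}$. For each syndrome $s=H_Zy$ with $y\in G_Z^{\epsilon'}$,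 fix an arbitrary element $e_Z(s)\in(y+C_Z)\cap R(\mathcal{T}(\mathrm{Cl}(y)))$ (this set is a nonempty coset of $C_X^\perp$, and it depends only on $s$). *)

theory Defs
  imports "HOL-Analysis.Analysis" "HOL-Library.Z2"
begin

text \<open>Vectors over F_2 of length n are modelled as bit^'n for a finite index type 'n
 (so n = CARD('n)); parity-check matrices as bit^'n^'m (m rows).\<close>

definition hw :: "bit^'k \<Rightarrow> nat" where
  "hw v = card {i. v $ i \<noteq> 0}"

definition ker :: "bit^'n^'m \<Rightarrow> (bit^'n) set" where
  "ker H = {x. H *v x = 0}"

definition dual :: "(bit^'n) set \<Rightarrow> (bit^'n) set" where
  "dual C = {y. \<forall>x\<in>C. (\<Sum>i\<in>UNIV. x $ i * y $ i) = 0}"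

definition dist_to :: "bit^'n \<Rightarrow> (bit^'n) set \<Rightarrow> nat" where
  "dist_to y C = Min {hw (y + c) | c. c \<in> C}"

definition nontriv_logicals :: "bit^'n^'mx \<Rightarrow> bit^'n^'mz \<Rightarrow> (bit^'n) set" where
  "nontriv_logicals HX HZ = (ker HZ - dual (ker HX)) \<union> (ker HX - dual (ker HZ))"

text \<open>d is the distance: minimum weight of a nontrivial logical operator
  (if there is none, d is only required to be a lower bound, i.e. plays the role of infinity).\<close>
definition is_css_distance :: "bit^'n^'mx \<Rightarrow> bit^'n^'mz \<Rightarrow> nat \<Rightarrow> bool" where
  "is_css_distance HX HZ d \<longleftrightarrow>
     (\<forall>y\<in>nontriv_logicals HX HZ. d \<le> hw y) \<and>
     (nontriv_logicals HX HZ \<noteq> {} \<longrightarrow> (\<exists>y\<in>nontriv_logicals HX HZ. hw y = d))"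

definition clustering :: "bit^'n^'mx \<Rightarrow> bit^'n^'mz \<Rightarrow> real \<Rightarrow> real \<Rightarrow> real \<Rightarrow> bool" where
  "clustering HX HZ c1 c2 e0 \<longleftrightarrow> (\<forall>e. 0 < e \<and> e < e0 \<longrightarrow>
     (\<forall>y. real (hw (HZ *v y)) \<le> e * real CARD('mz) \<longrightarrow>
        real (dist_to y (dual (ker HX))) \<le> c1 * e * real CARD('n) \<or>
        real (dist_to y (dual (ker HX))) \<ge> c2 * real CARD('n)) \<and>
     (\<forall>x. real (hw (HX *v x)) \<le> e * real CARD('mx) \<longrightarrow>
        real (dist_to x (dual (ker HZ))) \<le> c1 * e * real CARD('n) \<or>
        real (dist_to x (dual (ker HZ))) \<ge> c2 * real CARD('n)))"

definition goodZ :: "bit^'n^'mz \<Rightarrow> real \<Rightarrow> (bit^'n) set" where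
  "goodZ HZ e' = {y. real (hw (HZ *v y)) \<le> e' * real CARD('mz)}"

definition cluster :: "bit^'n^'mx \<Rightarrow> bit^'n^'mz \<Rightarrow> real \<Rightarrow> real \<Rightarrow> bit^'n \<Rightarrow> (bit^'n) set" where
  "cluster HX HZ c1 e' y = {y' \<in> goodZ HZ e'.
      real (dist_to (y + y') (dual (ker HX))) \<le> 2 * c1 * e' * real CARD('n)}"

definition translates :: "bit^'n^'mx \<Rightarrow> bit^'n^'mz \<Rightarrow> real \<Rightarrow> real \<Rightarrow> bit^'n \<Rightarrow> (bit^'n) set set" where
  "translates HX HZ c1 e' y = {cluster HX HZ c1 e' (y + c) | c. c \<in> ker HZ}"

end

theory Submission
  imports Defs
begin

text \<open>Two vectors of G_Z^\<epsilon>' whose sum is within 4 c1 \<epsilon>' n of C_X^\<perp> have a sum of syndrome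
  weight at most 2 \<epsilon>' m_Z, so clustering at parameter 2 \<epsilon>' pushes that distance down to
  2 c1 \<epsilon>' n. Hence "lying in the cluster of" is an equivalence relation on G_Z^\<epsilon>', and
  clusters, as well as their collections of translates, are constant along a cluster. If y'
  lies in the cluster of y, then e_Z picks y + c and y' + c' (with c, c' \<in> C_Z) from one
  and the same representative cluster; so c + c' \<in> C_Z is within 4 c1 \<epsilon>' n of C_X^\<perp>,
  and clustering at syndrome zero forces c + c' \<in> C_X^\<perp>.\<close>

instance bit :: finite
proof
  have "(UNIV :: bit set) = {0, 1}"
    using bit_not_zero_iff by blast
  then show "finite (UNIV :: bit set)"
    by (metis finite.emptyI finite.insertI)
qed

lemma bitvec_add_self [simp]: "(v :: bit^'n) + v = 0"
proof -
  have "a + a = 0" for a :: bit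
    by (cases a) simp_all
  then show ?thesis
    by (simp add: vec_eq_iff)
qed

lemma bitvec_add_self_left [simp]: "(v :: bit^'n) + (v + w) = w"
  by (simp flip: add.assoc)

lemma hw_eq_0_iff [simp]: "hw (v :: bit^'k) = 0 \<longleftrightarrow> v = 0"
  by (simp add: hw_def vec_eq_iff)

lemma hw_add_le: "hw ((u :: bit^'k) + v) \<le> hw u + hw v"
proof -
  have "hw (u + v) \<le> card ({i. u $ i \<noteq> 0} \<union> {i. v $ i \<noteq> 0})"
    unfolding hw_def by (intro card_mono) auto
  also have "\<dots> \<le> hw u + hw v"
    unfolding hw_def by (rule card_Un_le)
  finally show ?thesis .
qed

lemma zero_in_dual: "0 \<in> dual C"
  by (simp add: dual_def)

lemma dual_add_closed:
  fixes a b :: "bit^'n"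
  assumes "a \<in> dual C" and "b \<in> dual C"
  shows "a + b \<in> dual C"
proof -
  have "(\<Sum>i\<in>UNIV. x $ i * (a + b) $ i) = (\<Sum>i\<in>UNIV. x $ i * a $ i) + (\<Sum>i\<in>UNIV. x $ i * b $ i)"
    for x :: "bit^'n"
    by (simp only: vector_add_component distrib_left sum.distrib)
  with assms show ?thesis
    by (simp add: dual_def)
qed

lemma ker_add_closed: "a \<in> ker H \<Longrightarrow> b \<in> ker H \<Longrightarrow> a + b \<in> ker H"
  by (simp add: ker_def matrix_vector_right_distrib)

lemma mult_add_ker: "c \<in> ker H \<Longrightarrow> H *v (a + c) = H *v a"
  by (simp add: ker_def matrix_vector_right_distrib)

lemma dist_to_attained:
  assumes "C \<noteq> {}"
  obtains w where "w \<in> C" and "dist_to y C = hw (y + w)"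
proof -
  have "dist_to y C \<in> {hw (y + c) | c. c \<in> C}"
    unfolding dist_to_def using assms by (intro Min_in) (auto simp: setcompr_eq_image)
  then show thesis
    using that by blast
qed

lemma dist_to_le: "w \<in> C \<Longrightarrow> dist_to y C \<le> hw (y + w)"
  unfolding dist_to_def by (rule Min_le) (auto simp: setcompr_eq_image)

lemma dist_to_add_le:
  assumes "C \<noteq> {}" and closed: "\<And>a b. a \<in> C \<Longrightarrow> b \<in> C \<Longrightarrow> a + b \<in> C"
  shows "dist_to (x + y) C \<le> dist_to x C + dist_to y C"
proof -
  obtain wx where wx: "wx \<in> C" "dist_to x C = hw (x + wx)"
    using dist_to_attained assms(1) by blast
  obtain wy where wy: "wy \<in> C" "dist_to y C = hw (y + wy)"
    using dist_to_attained assms(1) by blast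
  have "dist_to (x + y) C \<le> hw (x + y + (wx + wy))"
    using closed[OF wx(1) wy(1)] by (rule dist_to_le)
  also have "x + y + (wx + wy) = (x + wx) + (y + wy)"
    by (simp add: algebra_simps)
  also have "hw \<dots> \<le> dist_to x C + dist_to y C"
    using wx(2) wy(2) hw_add_le by simp
  finally show ?thesis .
qed

lemma dist_to_eq_0_imp_mem:
  assumes "C \<noteq> {}" and "dist_to y C = 0"
  shows "y \<in> C"
proof -
  obtain w where "w \<in> C" and "hw (y + w) = 0"
    using dist_to_attained assms by metis
  moreover have "y + w = 0 \<Longrightarrow> y = w"
    by (metis add_right_cancel bitvec_add_self)
  ultimately show ?thesis
    by simp
qed

lemma dist_to_dual_add_le:
  "dist_to (x + y) (dual C) \<le> dist_to x (dual C) + dist_to y (dual C)"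
  using zero_in_dual dual_add_closed by (blast intro: dist_to_add_le)

locale clustered_css =
  fixes HX :: "bit^'n^'mx" and HZ :: "bit^'n^'mz" and c1 c2 e0 e' :: real
  assumes clustering: "clustering HX HZ c1 c2 e0"
    and c1_pos: "0 < c1"
    and e'_pos: "0 < e'"
    and e'_lt_e0: "2 * e' < e0"
    and e'_lt_c2: "4 * c1 * e' < c2"
begin

abbreviation distX :: "bit^'n \<Rightarrow> real" where
  "distX v \<equiv> real (dist_to v (dual (ker HX)))"

abbreviation Cl :: "bit^'n \<Rightarrow> (bit^'n) set" where
  "Cl \<equiv> cluster HX HZ c1 e'"

lemma distX_add_le: "distX (x + y) \<le> distX x + distX y"
  using dist_to_dual_add_le[of x y "ker HX"] by linarith

lemma clusteringZ:
  assumes "0 < e" and "e < e0" and "real (hw (HZ *v v)) \<le> e * real CARD('mz)"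
  shows "distX v \<le> c1 * e * real CARD('n) \<or> c2 * real CARD('n) \<le> distX v"
  using clustering assms unfolding clustering_def by blast

lemma far_gap: "4 * c1 * e' * real CARD('n) < c2 * real CARD('n)"
  using e'_lt_c2 by simp

lemma distX_gap:
  assumes "real (hw (HZ *v v)) \<le> 2 * e' * real CARD('mz)"
    and "distX v \<le> 4 * c1 * e' * real CARD('n)"
  shows "distX v \<le> 2 * c1 * e' * real CARD('n)"
  using clusteringZ[of "2 * e'" v] assms far_gap e'_pos e'_lt_e0 by auto

text \<open>This replaces the distance hypothesis on d: clustering at syndrome zero with
  \<epsilon> < 1 / (2 c1 n) already excludes nontrivial logicals of small coset distance.\<close>
lemma ker_distX_small_imp_dual:
  assumes "v \<in> ker HZ" and small: "distX v \<le> 4 * c1 * e' * real CARD('n)"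
  shows "v \<in> dual (ker HX)"
proof -
  define e where "e = min (e0 / 2) (1 / (2 * c1 * real CARD('n)))"
  have e_pos: "0 < e" and "e < e0"
    using e'_pos e'_lt_e0 c1_pos by (auto simp: e_def)
  have "HZ *v v = 0"
    using assms(1) by (simp add: ker_def)
  then have "distX v \<le> c1 * e * real CARD('n) \<or> c2 * real CARD('n) \<le> distX v"
    using clusteringZ[OF e_pos \<open>e < e0\<close>, of v] e_pos by (simp add: hw_def)
  moreover have "c1 * e * real CARD('n) \<le> 1 / 2"
  proof -
    have "c1 * e * real CARD('n) \<le> c1 * (1 / (2 * c1 * real CARD('n))) * real CARD('n)"
      using c1_pos by (intro mult_right_mono mult_left_mono) (auto simp: e_def)
    also have "\<dots> = 1 / 2"
      using c1_pos by simp
    finally show ?thesis .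
  qed
  ultimately have "dist_to v (dual (ker HX)) = 0"
    using small far_gap by linarith
  then show ?thesis
    using zero_in_dual by (blast intro: dist_to_eq_0_imp_mem)
qed

lemma mem_cluster_iff:
  "z \<in> Cl y \<longleftrightarrow> z \<in> goodZ HZ e' \<and> distX (y + z) \<le> 2 * c1 * e' * real CARD('n)"
  by (simp add: cluster_def)

lemma cluster_sym: "y \<in> goodZ HZ e' \<Longrightarrow> z \<in> Cl y \<Longrightarrow> y \<in> Cl z"
  by (simp add: mem_cluster_iff add.commute)

lemma cluster_trans:
  assumes x: "x \<in> Cl y" and z: "z \<in> Cl y"
  shows "z \<in> Cl x"
proof -
  have "real (hw (HZ *v (x + z))) \<le> 2 * e' * real CARD('mz)"
    using x z hw_add_le[of "HZ *v x" "HZ *v z"]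
    by (simp add: mem_cluster_iff goodZ_def matrix_vector_right_distrib)
  moreover have "distX (x + z) \<le> 4 * c1 * e' * real CARD('n)"
  proof -
    have "(y + x) + (y + z) = x + z"
      by (simp add: add_ac)
    then show ?thesis
      using x z distX_add_le[of "y + x" "y + z"] by (simp add: mem_cluster_iff)
  qed
  ultimately show ?thesis
    using z distX_gap by (simp add: mem_cluster_iff)
qed

lemma cluster_eq:
  assumes "y \<in> goodZ HZ e'" and "y' \<in> Cl y"
  shows "Cl y' = Cl y"
  using assms cluster_sym cluster_trans by blast

lemma mem_cluster_translate:
  assumes "c \<in> ker HZ" and "y' \<in> Cl y"
  shows "y' + c \<in> Cl (y + c)"
proof -
  have "(y + c) + (y' + c) = y + y'"
    by (simp add: add_ac)
  with assms show ?thesis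
    by (simp add: mem_cluster_iff goodZ_def mult_add_ker)
qed

lemma translates_eq:
  assumes "y \<in> goodZ HZ e'" and "y' \<in> Cl y"
  shows "translates HX HZ c1 e' y' = translates HX HZ c1 e' y"
proof -
  have "Cl (y' + c) = Cl (y + c)" if c: "c \<in> ker HZ" for c
  proof (rule cluster_eq)
    show "y + c \<in> goodZ HZ e'"
      using assms(1) c by (simp add: goodZ_def mult_add_ker)
    show "y' + c \<in> Cl (y + c)"
      using c assms(2) by (rule mem_cluster_translate)
  qed
  then show ?thesis
    unfolding translates_def by blast
qed

lemma decoder_consistent_on_cluster:
  fixes R :: "(bit^'n) set set \<Rightarrow> (bit^'n) set" and eZ :: "bit^'mz \<Rightarrow> bit^'n"
  assumes R_rep: "\<forall>y \<in> goodZ HZ e'. R (translates HX HZ c1 e' y) \<in> translates HX HZ c1 e' y"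
    and eZ_rep: "\<forall>y \<in> goodZ HZ e'.
      eZ (HZ *v y) \<in> {y + c | c. c \<in> ker HZ} \<inter> R (translates HX HZ c1 e' y)"
    and y: "y \<in> goodZ HZ e'" and y': "y' \<in> Cl y"
  shows "\<exists>w \<in> dual (ker HX). y' + eZ (HZ *v y') = y + eZ (HZ *v y) + w"
proof -
  have y'_good: "y' \<in> goodZ HZ e'"
    using y' by (simp add: mem_cluster_iff)
  obtain c0 where R_y: "R (translates HX HZ c1 e' y) = Cl (y + c0)"
    using R_rep y unfolding translates_def by blast
  obtain c where c: "c \<in> ker HZ" "eZ (HZ *v y) = y + c" "y + c \<in> Cl (y + c0)"
    using eZ_rep y R_y by auto
  obtain c' where c': "c' \<in> ker HZ" "eZ (HZ *v y') = y' + c'" "y' + c' \<in> Cl (y + c0)"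
    using eZ_rep y'_good R_y translates_eq[OF y y'] by auto
  have "y' + c' \<in> Cl (y + c)"
    using c(3) c'(3) by (rule cluster_trans)
  then have "distX ((y + y') + ((y + c) + (y' + c'))) \<le> 4 * c1 * e' * real CARD('n)"
    using y' distX_add_le[of "y + y'" "(y + c) + (y' + c')"] by (simp add: mem_cluster_iff)
  moreover have "(y + y') + ((y + c) + (y' + c')) = c + c'"
    by (simp add: add_ac)
  ultimately have "c + c' \<in> dual (ker HX)"
    using ker_distX_small_imp_dual ker_add_closed[OF c(1) c'(1)] by simp
  moreover have "y' + eZ (HZ *v y') = y + eZ (HZ *v y) + (c + c')"
    using c(2) c'(2) by (simp add: add_ac)
  ultimately show ?thesis
    by blast
qed

end

theorem lemma4p11:
  fixes HX :: "bit^'n^'mx" and HZ :: "bit^'n^'mz"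
    and c1 c2 e0 eps :: real and d :: nat
    and R :: "(bit^'n) set set \<Rightarrow> (bit^'n) set"
    and eZ :: "bit^'mz \<Rightarrow> bit^'n"
  assumes css: "dual (ker HX) \<subseteq> ker HZ"
    and dist: "is_css_distance HX HZ d"
    and clus: "clustering HX HZ c1 c2 e0"
    and c1_pos: "0 < c1"
    and eps_pos: "0 < eps"
    and eps_small: "eps < (1/1000) * min (e0 / 2) (min (c2 / (4 * c1)) (real d / (2 * c1 * real CARD('n))))"
    and R_rep: "\<forall>y \<in> goodZ HZ (1000 * eps).
                  R (translates HX HZ c1 (1000 * eps) y) \<in> translates HX HZ c1 (1000 * eps) y"
    and eZ_def: "\<forall>y \<in> goodZ HZ (1000 * eps).
                  eZ (HZ *v y) \<in> {y + c | c. c \<in> ker HZ} \<inter> R (translates HX HZ c1 (1000 * eps) y)"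
  shows "\<forall>y \<in> goodZ HZ (1000 * eps). \<forall>y' \<in> cluster HX HZ c1 (1000 * eps) y.
           y' + eZ (HZ *v y') \<in> {y + eZ (HZ *v y) + c | c. c \<in> dual (ker HX)}"
proof -
  have "1000 * eps < c2 / (4 * c1)"
    using eps_small by linarith
  then have "4 * c1 * (1000 * eps) < c2"
    using c1_pos by (simp add: field_simps)
  moreover have "2 * (1000 * eps) < e0"
    using eps_small by linarith
  ultimately interpret clustered_css HX HZ c1 c2 e0 "1000 * eps"
    using clus c1_pos eps_pos by unfold_locales simp_all
  show ?thesis
    using decoder_consistent_on_cluster[OF R_rep eZ_def] by blast
qed

end
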